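(* Let $G$ be a graph on $n$ vertices with maximum degree at most $\Delta_{\max}$, let $t\in\mathbb{N}$, let $0<\varepsilon\leq\frac12$, and let $\eta$ satisfy $1\leq \eta\leq \frac{\varepsilon^2}{128\log n}\cdot\frac{\Delta_{\max}}{t}$. Let $c:E(G)\to[t]$ be a (not necessarily proper) edge-colouring such that for every edge $uv\in E(G)$ and every $i\in[t]$, $$s_{c(uv)}(u)+s_{c(uv)}(v)\leq \eta+s_i(u)+s_i(v).$$ Then $\tilde{d}\leq (1+\varepsilon)\frac{\Delta_{\max}}{t}$.
   Context: For a vertex $v$ and colour $i\in[t]$, $d_i(v)$ is the number of edges of colour $i$ incident to $v$, and $s_i(v)=\max\{d_i(v)-\frac{\Delta_{\max}}{t},0\}$ is the surplus of colour $i$ at $v$. $\tilde{d}=\max_{i\in[t]}\max_{v\in V(G)} d_i(v)$. *)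

theory Defs
  imports Complex_Main
begin

definition simple_graph :: "'a set \<Rightarrow> 'a set set \<Rightarrow> bool" where
  "simple_graph V E \<longleftrightarrow> finite V \<and> (\<forall>e\<in>E. e \<subseteq> V \<and> card e = 2)"

definition degree :: "'a set set \<Rightarrow> 'a \<Rightarrow> nat" where
  "degree E v = card {e\<in>E. v \<in> e}"

definition col_deg :: "'a set set \<Rightarrow> ('a set \<Rightarrow> nat) \<Rightarrow> nat \<Rightarrow> 'a \<Rightarrow> nat" where
  "col_deg E c i v = card {e\<in>E. v \<in> e \<and> c e = i}"

definition surplus :: "'a set set \<Rightarrow> ('a set \<Rightarrow> nat) \<Rightarrow> real \<Rightarrow> nat \<Rightarrow> nat \<Rightarrow> 'a \<Rightarrow> real" where
  "surplus E c \<Delta> t i v = max (real (col_deg E c i v) - \<Delta> / real t) 0"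

definition dtilde :: "'a set \<Rightarrow> 'a set set \<Rightarrow> ('a set \<Rightarrow> nat) \<Rightarrow> nat \<Rightarrow> nat" where
  "dtilde V E c t = Max ({col_deg E c i v | i v. i \<in> {1..t} \<and> v \<in> V} \<union> {0})"

end

theory Submission
  imports Defs
begin

(* Write D = \<Delta>/t and suppose some surplus exceeds \<epsilon> D. Let \<sigma> be the largest surplus, attained
   by colour a at v0, and let b be a colour with no surplus at v0 (one exists because v0 has degree
   at most \<Delta>). For colours p, q and a threshold l count the vertices with s_p - s_q \<ge> l. By the
   balance condition the other end u of a p-coloured edge at such a vertex has s_q u - s_p u \<ge> l - \<eta>,
   so double counting the p-coloured edges shows that, while l \<ge> 3\<sigma>/4 + \<eta>, the count for
   (q, p, l - \<eta>) is at least 1 + \<epsilon>/4 times the count for (p, q, l). Starting from (a, b, \<sigma>),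
   which counts v0, about \<sigma>/(4\<eta>) rounds are possible, so (1 + \<epsilon>/4)^(\<sigma>/(4\<eta>)) \<le> n; this
   contradicts \<sigma> > \<epsilon> D \<ge> 128 \<eta> ln n / \<epsilon>. *)

lemma simple_graph_finite_edges: "simple_graph V E \<Longrightarrow> finite E"
  unfolding simple_graph_def by (meson PowI finite_Pow_iff finite_subset subsetI)

definition colour_nbrs :: "'a set set \<Rightarrow> ('a set \<Rightarrow> nat) \<Rightarrow> nat \<Rightarrow> 'a \<Rightarrow> 'a set" where
  "colour_nbrs E c i v = {u. {v, u} \<in> E \<and> c {v, u} = i}"

lemma colour_nbrs_sym: "u \<in> colour_nbrs E c i v \<longleftrightarrow> v \<in> colour_nbrs E c i u"
  by (simp add: colour_nbrs_def insert_commute)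

lemma colour_nbrs_subset: "simple_graph V E \<Longrightarrow> colour_nbrs E c i v \<subseteq> V"
  by (auto simp: simple_graph_def colour_nbrs_def)

lemma col_deg_eq_card_colour_nbrs:
  assumes "\<forall>e\<in>E. card e = 2"
  shows "col_deg E c i v = card (colour_nbrs E c i v)"
proof -
  have "bij_betw (\<lambda>u. {v, u}) (colour_nbrs E c i v) {e\<in>E. v \<in> e \<and> c e = i}"
  proof (rule bij_betw_imageI)
    show "inj_on (\<lambda>u. {v, u}) (colour_nbrs E c i v)"
      by (auto intro: inj_onI simp: doubleton_eq_iff)
    have "e \<in> (\<lambda>u. {v, u}) ` colour_nbrs E c i v" if "e \<in> E" "v \<in> e" "c e = i" for e
    proof -
      obtain x y where "e = {x, y}" using assms \<open>e \<in> E\<close> by (meson card_2_iff)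
      then have "e = {v, if v = x then y else x}" using \<open>v \<in> e\<close> by auto
      then show ?thesis using that by (auto simp: colour_nbrs_def)
    qed
    then show "(\<lambda>u. {v, u}) ` colour_nbrs E c i v = {e\<in>E. v \<in> e \<and> c e = i}"
      by (auto simp: colour_nbrs_def)
  qed
  then show ?thesis unfolding col_deg_def by (simp add: bij_betw_same_card)
qed

lemma sum_col_deg_eq_degree:
  assumes "finite E" "finite I" "\<forall>e\<in>E. c e \<in> I"
  shows "(\<Sum>i\<in>I. col_deg E c i v) = degree E v"
proof -
  have "(\<Sum>i\<in>I. col_deg E c i v) = card (\<Union>i\<in>I. {e\<in>E. v \<in> e \<and> c e = i})"
    unfolding col_deg_def using assms by (intro card_UN_disjoint[symmetric]) auto
  also have "(\<Union>i\<in>I. {e\<in>E. v \<in> e \<and> c e = i}) = {e\<in>E. v \<in> e}"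
    using assms(3) by auto
  finally show ?thesis by (simp add: degree_def)
qed

lemma surplus_nonneg: "0 \<le> surplus E c \<Delta> t i v"
  by (simp add: surplus_def)

lemma col_deg_le_surplus: "real (col_deg E c i v) \<le> \<Delta> / real t + surplus E c \<Delta> t i v"
  by (simp add: surplus_def)

lemma col_deg_eq_surplus:
  "0 < surplus E c \<Delta> t i v \<Longrightarrow> real (col_deg E c i v) = \<Delta> / real t + surplus E c \<Delta> t i v"
  by (auto simp: surplus_def max_def split: if_splits)

lemma dtilde_le:
  assumes "finite V" "0 \<le> B" "\<forall>i\<in>{1..t}. \<forall>v\<in>V. real (col_deg E c i v) \<le> B"
  shows "real (dtilde V E c t) \<le> B"
proof -
  let ?S = "{col_deg E c i v | i v. i \<in> {1..t} \<and> v \<in> V}"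
  have "?S = (\<lambda>(i, v). col_deg E c i v) ` ({1..t} \<times> V)" by fastforce
  then have "finite ?S" using assms(1) by simp
  then have "dtilde V E c t \<in> ?S \<union> {0}" unfolding dtilde_def by (intro Max_in) auto
  then show ?thesis using assms(2,3) by auto
qed

lemma growth_factor_bound:
  fixes D \<sigma> l \<eta> \<epsilon> :: real
  assumes "0 < D" "\<epsilon> * D < \<sigma>" "0 < \<epsilon>" "\<epsilon> \<le> 1/2" "0 \<le> \<eta>" "3/4 * \<sigma> + \<eta> \<le> l"
  shows "(1 + \<epsilon>/4) * (D + \<sigma> - l + \<eta>) \<le> D + l"
proof -
  have "0 < \<sigma>" using assms by (metis mult_pos_pos order.strict_trans)
  then have "\<epsilon> * \<sigma> \<le> \<sigma> / 2" using mult_right_mono[OF assms(4), of \<sigma>] by simp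
  moreover have "3/4 * (\<epsilon> * \<sigma>) + \<epsilon> * \<eta> \<le> \<epsilon> * l"
    using mult_left_mono[OF assms(6), of \<epsilon>] assms(3) by (simp add: algebra_simps)
  ultimately have "4 * \<sigma> + 4 * \<eta> + \<epsilon> * D + \<epsilon> * \<sigma> + \<epsilon> * \<eta> \<le> 8 * l + \<epsilon> * l"
    using assms \<open>0 < \<sigma>\<close> by linarith
  then show ?thesis by (simp add: field_simps)
qed

lemma ln_one_plus_quarter_ge: "0 \<le> (\<epsilon>::real) \<Longrightarrow> \<epsilon> \<le> 1/2 \<Longrightarrow> \<epsilon> / 5 \<le> ln (1 + \<epsilon> / 4)"
  using ln_one_plus_pos_lower_bound[of "\<epsilon> / 4"] mult_right_mono[of \<epsilon> "1/2" \<epsilon>]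
  by (simp add: power2_eq_square)

lemma expansion_rounds_bound:
  fixes K n :: nat and \<epsilon> \<eta> \<sigma> :: real
  assumes "(1 + \<epsilon>/4) ^ K \<le> real n" "2 \<le> n" "0 < \<epsilon>" "\<epsilon> \<le> 1/2" "0 < \<eta>"
    and "128 * \<eta> * ln (real n) \<le> \<epsilon> * \<sigma>"
  shows "4 * \<eta> * (real K + 1) \<le> \<sigma>"
proof -
  have "1/4 \<le> ln (1 + 1/2 :: real)"
    using ln_one_plus_pos_lower_bound[of "1/2"] by (simp add: power2_eq_square)
  also have "\<dots> \<le> ln (real n)" using assms(2) by simp
  finally have ln_n: "1/4 \<le> ln (real n)" .
  have "real K * (\<epsilon> / 5) \<le> real K * ln (1 + \<epsilon>/4)"
    using assms(3,4) by (intro mult_left_mono ln_one_plus_quarter_ge) auto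
  also have "\<dots> = ln ((1 + \<epsilon>/4) ^ K)" using assms(3) by (simp add: ln_realpow)
  also have "\<dots> \<le> ln (real n)" using assms(1,3) by (intro ln_mono) auto
  finally have "real K * (\<epsilon> / 5) \<le> ln (real n)" .
  moreover have "\<epsilon> * (real K + 1) = 5 * (real K * (\<epsilon> / 5)) + \<epsilon>" by (simp add: algebra_simps)
  ultimately have "\<epsilon> * (real K + 1) \<le> 32 * ln (real n)" using ln_n assms(4) by linarith
  then have "4 * \<eta> * (\<epsilon> * (real K + 1)) \<le> 4 * \<eta> * (32 * ln (real n))"
    using assms(5) by (intro mult_left_mono) auto
  then have "\<epsilon> * (4 * \<eta> * (real K + 1)) \<le> \<epsilon> * \<sigma>"
    using assms(6) by (simp add: algebra_simps)
  then show ?thesis using assms(3) by simp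
qed

lemma admissible_eta_bound:
  fixes n :: nat and D \<epsilon> \<eta> :: real
  assumes "0 < \<eta>" "\<eta> \<le> \<epsilon>\<^sup>2 / (128 * ln (real n)) * D"
  shows "2 \<le> n" "0 < D" "128 * \<eta> * ln (real n) \<le> \<epsilon>\<^sup>2 * D"
proof -
  have ln_pos: "0 < ln (real n)"
  proof (rule ccontr)
    assume "\<not> 0 < ln (real n)"
    then have "ln (real n) = 0" by (cases "n = 0") (auto intro: antisym)
    then show False using assms by simp
  qed
  then show "2 \<le> n" by (cases "n = 0 \<or> n = 1") auto
  show "0 < D"
  proof (rule ccontr)
    assume "\<not> 0 < D"
    then have "\<epsilon>\<^sup>2 / (128 * ln (real n)) * D \<le> 0" using ln_pos by (intro mult_nonneg_nonpos) auto
    then show False using assms by simp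
  qed
  have "\<eta> \<le> \<epsilon>\<^sup>2 * D / (128 * ln (real n))" using assms(2) by simp
  then show "128 * \<eta> * ln (real n) \<le> \<epsilon>\<^sup>2 * D" using ln_pos by (simp add: pos_le_divide_eq mult_ac)
qed

locale balanced_colouring =
  fixes V :: "'a set" and E :: "'a set set" and c :: "'a set \<Rightarrow> nat"
    and t :: nat and \<Delta> \<eta> :: real
  assumes graph: "simple_graph V E"
    and colours: "\<forall>e\<in>E. c e \<in> {1..t}"
    and max_degree: "\<forall>v\<in>V. real (degree E v) \<le> \<Delta>"
    and balanced: "\<forall>u v. {u, v} \<in> E \<longrightarrow> (\<forall>i\<in>{1..t}.
        surplus E c \<Delta> t (c {u, v}) u + surplus E c \<Delta> t (c {u, v}) v
          \<le> \<eta> + surplus E c \<Delta> t i u + surplus E c \<Delta> t i v)"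
begin

abbreviation s :: "nat \<Rightarrow> 'a \<Rightarrow> real" where
  "s \<equiv> surplus E c \<Delta> t"

abbreviation D :: real where
  "D \<equiv> \<Delta> / real t"

definition gap :: "nat \<Rightarrow> nat \<Rightarrow> real \<Rightarrow> nat" where
  "gap p q l = card {v\<in>V. l \<le> s p v - s q v}"

lemma finite_vertices: "finite V"
  using graph by (simp add: simple_graph_def)

lemma gap_le_card: "gap p q l \<le> card V"
  unfolding gap_def using finite_vertices by (intro card_mono) auto

lemma col_deg_eq_card: "col_deg E c i v = card (colour_nbrs E c i v)"
  using graph by (intro col_deg_eq_card_colour_nbrs) (simp add: simple_graph_def)

lemma exists_colour_without_surplus:
  assumes "v \<in> V" "0 < t"
  shows "\<exists>b\<in>{1..t}. s b v = 0"
proof (rule ccontr)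
  assume "\<not> ?thesis"
  then have "\<forall>b\<in>{1..t}. D < real (col_deg E c b v)"
    by (auto simp: surplus_def max_def split: if_splits)
  then have "(\<Sum>b\<in>{1..t}. D) < (\<Sum>b\<in>{1..t}. real (col_deg E c b v))"
    using assms(2) by (intro sum_strict_mono) auto
  also have "\<dots> = real (degree E v)"
    using sum_col_deg_eq_degree[OF simple_graph_finite_edges[OF graph] _ colours]
    by (metis finite_atLeastAtMost of_nat_sum)
  finally have "\<Delta> < real (degree E v)" using assms(2) by simp
  moreover have "real (degree E v) \<le> \<Delta>" using max_degree assms(1) by blast
  ultimately show False by linarith
qed

lemma gap_expansion:
  assumes q: "q \<in> {1..t}" and l: "0 < l" and \<sigma>: "\<forall>v\<in>V. s q v \<le> \<sigma>"
  shows "real (gap p q l) * (D + l) \<le> real (gap q p (l - \<eta>)) * (D + \<sigma> - l + \<eta>)"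
proof -
  define X where "X = {v\<in>V. l \<le> s p v - s q v}"
  define Y where "Y = {v\<in>V. l - \<eta> \<le> s q v - s p v}"
  define N where "N = colour_nbrs E c p"
  have N_subset: "N v \<subseteq> V" for v
    unfolding N_def by (rule colour_nbrs_subset[OF graph])
  have fin: "finite X" "finite Y" "finite (N v)" for v
    unfolding X_def Y_def using finite_vertices N_subset by (auto intro: finite_subset)
  have card_N: "real (card (N v)) = real (col_deg E c p v)" for v
    by (simp add: N_def col_deg_eq_card)
  have crossing: "u \<in> Y \<and> w \<in> N u" if "w \<in> X" "u \<in> N w" for w u
  proof -
    have "{w, u} \<in> E" "c {w, u} = p" using that(2) by (simp_all add: N_def colour_nbrs_def)
    then have "s p w + s p u \<le> \<eta> + s q w + s q u"
      using balanced[rule_format, OF \<open>{w, u} \<in> E\<close> q] by simp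
    moreover have "l \<le> s p w - s q w" using that(1) by (simp add: X_def)
    moreover have "u \<in> V" using that(2) N_subset by blast
    ultimately have "u \<in> Y" by (simp add: Y_def)
    then show ?thesis using that(2) colour_nbrs_sym unfolding N_def by metis
  qed
  have "real (card X) * (D + l) \<le> (\<Sum>w\<in>X. real (card (N w)))"
  proof -
    have "D + l \<le> real (card (N w))" if "w \<in> X" for w
    proof -
      have "l \<le> s p w" using that surplus_nonneg[of E c \<Delta> t q w] by (simp add: X_def)
      then show ?thesis using l col_deg_eq_surplus[of E c \<Delta> t p w] by (simp add: card_N)
    qed
    then show ?thesis using sum_mono[of X "\<lambda>_. D + l"] by (simp add: mult.commute)
  qed
  also have "\<dots> = real (card (Sigma X N))" using fin by simp
  also have "\<dots> \<le> real (card (Sigma Y N))"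
  proof -
    \<comment> \<open>read backwards, a p-coloured edge leaving X is a p-coloured edge leaving Y\<close>
    have "prod.swap z \<in> Sigma Y N" if "z \<in> Sigma X N" for z
      using that crossing by (cases z) auto
    then have "prod.swap ` Sigma X N \<subseteq> Sigma Y N" by blast
    then have "card (prod.swap ` Sigma X N) \<le> card (Sigma Y N)" using fin by (intro card_mono) auto
    then show ?thesis by (simp add: card_image)
  qed
  also have "\<dots> = (\<Sum>u\<in>Y. real (card (N u)))" using fin by simp
  also have "\<dots> \<le> real (card Y) * (D + \<sigma> - l + \<eta>)"
  proof -
    have "real (card (N u)) \<le> D + \<sigma> - l + \<eta>" if "u \<in> Y" for u
    proof -
      have "u \<in> V" "l - \<eta> \<le> s q u - s p u" using that by (simp_all add: Y_def)
      then show ?thesis using \<sigma> col_deg_le_surplus[of E c p u \<Delta> t] by (auto simp: card_N)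
    qed
    then show ?thesis using sum_mono[of Y _ "\<lambda>_. D + \<sigma> - l + \<eta>"] by (simp add: mult.commute)
  qed
  finally show ?thesis by (simp add: gap_def X_def Y_def)
qed

lemma gap_growth:
  assumes q: "q \<in> {1..t}" and \<sigma>: "\<forall>v\<in>V. s q v \<le> \<sigma>"
    and D: "0 < D" "\<epsilon> * D < \<sigma>" and \<epsilon>: "0 < \<epsilon>" "\<epsilon> \<le> 1/2" and \<eta>: "0 \<le> \<eta>"
    and l: "3/4 * \<sigma> + \<eta> \<le> l" "l \<le> \<sigma>"
  shows "(1 + \<epsilon>/4) * real (gap p q l) \<le> real (gap q p (l - \<eta>))"
proof -
  have "0 < \<sigma>" using D \<epsilon> by (metis mult_pos_pos order.strict_trans)
  then have "0 < l" "0 < D + \<sigma> - l + \<eta>" using D \<eta> l by linarith+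
  have "(1 + \<epsilon>/4) * real (gap p q l) * (D + \<sigma> - l + \<eta>)
      = real (gap p q l) * ((1 + \<epsilon>/4) * (D + \<sigma> - l + \<eta>))" by simp
  also have "\<dots> \<le> real (gap p q l) * (D + l)"
    using growth_factor_bound[OF D \<epsilon> \<eta> l(1)] by (intro mult_left_mono) auto
  also have "\<dots> \<le> real (gap q p (l - \<eta>)) * (D + \<sigma> - l + \<eta>)"
    using gap_expansion[OF q \<open>0 < l\<close> \<sigma>] .
  finally show ?thesis using \<open>0 < D + \<sigma> - l + \<eta>\<close> by simp
qed

lemma gap_iteration:
  assumes pq: "p \<in> {1..t}" "q \<in> {1..t}" "1 \<le> gap p q \<sigma>"
    and \<sigma>: "\<forall>r\<in>{1..t}. \<forall>v\<in>V. s r v \<le> \<sigma>"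
    and D: "0 < D" "\<epsilon> * D < \<sigma>" and \<epsilon>: "0 < \<epsilon>" "\<epsilon> \<le> 1/2" and \<eta>: "0 \<le> \<eta>"
  shows "4 * \<eta> * real k \<le> \<sigma> \<Longrightarrow>
    \<exists>p'\<in>{1..t}. \<exists>q'\<in>{1..t}. (1 + \<epsilon>/4) ^ k \<le> real (gap p' q' (\<sigma> - real k * \<eta>))"
proof (induction k)
  case 0
  have "(1 + \<epsilon>/4) ^ 0 \<le> real (gap p q (\<sigma> - real 0 * \<eta>))" using pq(3) by simp
  then show ?case using pq(1,2) by blast
next
  case (Suc k)
  have "4 * \<eta> * real k \<le> 4 * \<eta> * real (Suc k)" using \<eta> by (intro mult_left_mono) auto
  then have "4 * \<eta> * real k \<le> \<sigma>" using Suc.prems by linarith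
  then obtain p' q' where p'q': "p' \<in> {1..t}" "q' \<in> {1..t}"
    and IH: "(1 + \<epsilon>/4) ^ k \<le> real (gap p' q' (\<sigma> - real k * \<eta>))"
    using Suc.IH by blast
  have l: "3/4 * \<sigma> + \<eta> \<le> \<sigma> - real k * \<eta>" "\<sigma> - real k * \<eta> \<le> \<sigma>"
    using Suc.prems \<eta> by (simp_all add: algebra_simps)
  have "(1 + \<epsilon>/4) ^ Suc k = (1 + \<epsilon>/4) * (1 + \<epsilon>/4) ^ k" by simp
  also have "\<dots> \<le> (1 + \<epsilon>/4) * real (gap p' q' (\<sigma> - real k * \<eta>))"
    using IH \<epsilon> by (intro mult_left_mono) auto
  also have "\<dots> \<le> real (gap q' p' (\<sigma> - real k * \<eta> - \<eta>))"
    using gap_growth[OF p'q'(2) _ D \<epsilon> \<eta> l] \<sigma> p'q'(2) by blast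
  also have "\<sigma> - real k * \<eta> - \<eta> = \<sigma> - real (Suc k) * \<eta>" by (simp add: algebra_simps)
  finally show ?case using p'q' by blast
qed

lemma surplus_le_eps_D:
  assumes n: "2 \<le> card V" and \<epsilon>: "0 < \<epsilon>" "\<epsilon> \<le> 1/2" and \<eta>: "0 < \<eta>" and D: "0 < D"
    and \<eta>_small: "128 * \<eta> * ln (card V) \<le> \<epsilon>\<^sup>2 * D"
    and iv: "i \<in> {1..t}" "v \<in> V"
  shows "s i v \<le> \<epsilon> * D"
proof (rule ccontr)
  assume "\<not> s i v \<le> \<epsilon> * D"
  have "0 < t" using D by (cases t) auto
  let ?S = "(\<lambda>(r, u). s r u) ` ({1..t} \<times> V)"
  have "finite ?S" "?S \<noteq> {}" using finite_vertices iv by auto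
  then have "Max ?S \<in> ?S" by (rule Max_in)
  then obtain a v0 where a: "a \<in> {1..t}" "v0 \<in> V" and Max_S: "Max ?S = s a v0" by auto
  define \<sigma> where "\<sigma> = s a v0"
  have max: "\<forall>r\<in>{1..t}. \<forall>u\<in>V. s r u \<le> \<sigma>"
  proof (intro ballI)
    fix r u assume "r \<in> {1..t}" "u \<in> V"
    then have "s r u \<in> ?S" by force
    then show "s r u \<le> \<sigma>" using Max_ge[OF \<open>finite ?S\<close>] Max_S by (simp add: \<sigma>_def)
  qed
  then have big: "\<epsilon> * D < \<sigma>" using iv \<open>\<not> s i v \<le> \<epsilon> * D\<close> by force
  obtain b where b: "b \<in> {1..t}" "s b v0 = 0"
    using exists_colour_without_surplus[OF a(2) \<open>0 < t\<close>] by blast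
  have "v0 \<in> {u\<in>V. \<sigma> \<le> s a u - s b u}" using a b by (simp add: \<sigma>_def)
  then have "0 < gap a b \<sigma>" unfolding gap_def using finite_vertices by (auto simp: card_gt_0_iff)
  then have start: "1 \<le> gap a b \<sigma>" by simp
  have "\<epsilon>\<^sup>2 * D = \<epsilon> * (\<epsilon> * D)" by (simp add: power2_eq_square)
  also have "\<dots> \<le> \<epsilon> * \<sigma>" using big \<epsilon>(1) by (intro mult_left_mono) auto
  finally have \<eta>_\<sigma>: "128 * \<eta> * ln (card V) \<le> \<epsilon> * \<sigma>" using \<eta>_small by linarith
  have rounds: "4 * \<eta> * real k \<le> \<sigma>" for k
  proof (induction k)
    case 0
    show ?case using surplus_nonneg by (simp add: \<sigma>_def)
  next
    case (Suc k)
    obtain p q where "(1 + \<epsilon>/4) ^ k \<le> real (gap p q (\<sigma> - real k * \<eta>))"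
      using gap_iteration[OF a(1) b(1) start max D big \<epsilon> less_imp_le[OF \<eta>] Suc.IH] by blast
    also have "\<dots> \<le> real (card V)" using gap_le_card by simp
    finally have "4 * \<eta> * (real k + 1) \<le> \<sigma>" using expansion_rounds_bound n \<epsilon> \<eta> \<eta>_\<sigma> by blast
    then show ?case by (simp add: add.commute)
  qed
  obtain k where "\<sigma> / (4 * \<eta>) < real k" using reals_Archimedean2 by blast
  then have "\<sigma> < 4 * \<eta> * real k" using \<eta> by (simp add: pos_divide_less_eq mult.commute)
  then show False using rounds[of k] by simp
qed

end

theorem theorem4p2:
  fixes V :: "'a set" and E :: "'a set set" and c :: "'a set \<Rightarrow> nat"
    and n t :: nat and \<Delta> \<epsilon> \<eta> :: real
  assumes G: "simple_graph V E"
    and n: "card V = n"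
    and maxdeg: "\<forall>v\<in>V. real (degree E v) \<le> \<Delta>"
    and eps: "0 < \<epsilon>" "\<epsilon> \<le> 1/2"
    and eta: "1 \<le> \<eta>" "\<eta> \<le> \<epsilon>\<^sup>2 / (128 * ln (real n)) * (\<Delta> / real t)"
    and col: "\<forall>e\<in>E. c e \<in> {1..t}"
    and balanced: "\<forall>u v. {u, v} \<in> E \<longrightarrow> (\<forall>i\<in>{1..t}.
        surplus E c \<Delta> t (c {u, v}) u + surplus E c \<Delta> t (c {u, v}) v
          \<le> \<eta> + surplus E c \<Delta> t i u + surplus E c \<Delta> t i v)"
  shows "real (dtilde V E c t) \<le> (1 + \<epsilon>) * (\<Delta> / real t)"
proof -
  interpret balanced_colouring V E c t \<Delta> \<eta>
    using G col maxdeg balanced by unfold_locales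
  have \<eta>: "0 < \<eta>" using eta(1) by simp
  note bounds = admissible_eta_bound[OF \<eta> eta(2)]
  have "real (col_deg E c i v) \<le> (1 + \<epsilon>) * D" if "i \<in> {1..t}" "v \<in> V" for i v
  proof -
    have "s i v \<le> \<epsilon> * D" using surplus_le_eps_D[OF _ eps \<eta> bounds(2) _ that] bounds n by simp
    moreover have "(1 + \<epsilon>) * D = D + \<epsilon> * D" by (simp only: distrib_right mult_1)
    ultimately show ?thesis using col_deg_le_surplus[of E c i v \<Delta> t] by linarith
  qed
  moreover have "0 \<le> (1 + \<epsilon>) * D" using eps bounds(2) by (intro mult_nonneg_nonneg) auto
  ultimately show ?thesis using dtilde_le finite_vertices by blast
qed

end
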